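(* Let $u,v\in X_0^+(2r)$, $d:=\min\{d(u),d(v)\}$, $\hat u:=u+d\cdot e$, $\hat v:=v+d\cdot e$, where $e=(0,\dots,0,1,\dots,1)\in\mathbb Z^{2r}$ has zeros in the first $r$ and ones in the last $r$ components. Then $(u,v)$ satisfies (4.2) if and only if $d(\hat u)=0$ (for even $r$), respectively $d(\hat v)=0$ (for odd $r$), and $$\theta_i'(\hat v)\prec\theta_i(\hat u)\quad\text{for } i=1,2.$$
   Context: $X^+(N):=\{x\in\mathbb Z^N:x_1\ge\dots\ge x_N\}$, $X_0^+(N):=\{x\in X^+(N):x_i+x_{N+1-i}\text{ independent of } i\}$. For $y\in X_0^+(2r)$ the defect is $d(y):=y_r-y_{r+1}$, and $X_{sp}(2r):=\{y\in X_0^+(2r):d(y)=0\}$. A pair $(u,v)$ with $u,v\in X_0^+(2r)$ satisfies (4.2) if $u_{2\rho-1}\ge v_{2\rho-1}\ge v_{2\rho}\ge u_{2\rho}$ for $\rho=1,\dots,r$. For $\beta\in\mathbb Z^r$, $\alpha\in\mathbb Z^{r+1}$, write $\beta\prec\alpha$ if $\alpha_\rho\ge\beta_\rho\ge\alpha_{\rho+1}$ for $\rho=1,\dots,r$. Splitting maps: for even $r$, $y\in X_{sp}(2r)$, $z\in X_0^+(2r)$: $\theta_1(y):=(y_1,y_2,y_4,\dots,y_r,y_{r+3},y_{r+5},\dots,y_{2r-1},y_{2r})$, $\theta_2(y):=(y_1,y_3,\dots,y_{r-1},y_{r+1},y_{r+2},y_{r+4},\dots,y_{2r})$, $\theta_1'(z):=(z_2,z_4,\dots,z_r,z_{r+1},z_{r+3},\dots,z_{2r-1})$,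 $\theta_2'(z):=(z_1,z_3,\dots,z_{r-1},z_{r+2},z_{r+4},\dots,z_{2r})$. For odd $r$, $z\in X_0^+(2r)$, $y\in X_{sp}(2r)$: $\theta_1(z):=(z_1,z_2,z_4,\dots,z_{r-1},z_{r+2},z_{r+4},\dots,z_{2r-1},z_{2r})$, $\theta_2(z):=(z_1,z_3,\dots,z_r,z_{r+1},z_{r+3},\dots,z_{2r})$, $\theta_1'(y):=(y_2,y_4,\dots,y_{r+1},y_{r+2},y_{r+4},\dots,y_{2r-1})$, $\theta_2'(y):=(y_1,y_3,\dots,y_r,y_{r+3},y_{r+5},\dots,y_{2r})$. For $r=1$: $\theta_i(z)=z$, $\theta_i'(y)=y_1$. (So for even $r$, $\theta$ is applied only to weights of defect $0$; for odd $r$, $\theta'$ only to weights of defect $0$.) *)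

theory Defs
  imports Main
begin

text \<open>Elements of Z^N are integer lists of length N; components are indexed 1-based.\<close>

definition ent :: "int list \<Rightarrow> nat \<Rightarrow> int" where
  "ent x i = x ! (i - 1)"

definition Xplus :: "nat \<Rightarrow> int list set" where
  "Xplus N = {x. length x = N \<and> (\<forall>i j. 1 \<le> i \<and> i \<le> j \<and> j \<le> N \<longrightarrow> ent x j \<le> ent x i)}"

definition X0plus :: "nat \<Rightarrow> int list set" where
  "X0plus N = {x \<in> Xplus N. \<forall>i j. 1 \<le> i \<and> i \<le> N \<and> 1 \<le> j \<and> j \<le> N \<longrightarrow>
       ent x i + ent x (N + 1 - i) = ent x j + ent x (N + 1 - j)}"

definition defect :: "nat \<Rightarrow> int list \<Rightarrow> int" where
  "defect r y = ent y r - ent y (r + 1)"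

definition Xsp :: "nat \<Rightarrow> int list set" where
  "Xsp r = {y \<in> X0plus (2 * r). defect r y = 0}"

definition cond42 :: "nat \<Rightarrow> int list \<Rightarrow> int list \<Rightarrow> bool" where
  "cond42 r u v \<longleftrightarrow> (\<forall>\<rho>\<in>{1..r}.
      ent u (2*\<rho>-1) \<ge> ent v (2*\<rho>-1) \<and> ent v (2*\<rho>-1) \<ge> ent v (2*\<rho>) \<and> ent v (2*\<rho>) \<ge> ent u (2*\<rho>))"

definition interlace :: "int list \<Rightarrow> int list \<Rightarrow> bool" (infix "\<prec>" 50) where
  "\<beta> \<prec> \<alpha> \<longleftrightarrow> length \<alpha> = length \<beta> + 1 \<and>
     (\<forall>\<rho>\<in>{1..length \<beta>}. ent \<alpha> \<rho> \<ge> ent \<beta> \<rho> \<and> ent \<beta> \<rho> \<ge> ent \<alpha> (\<rho> + 1))"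

definition evec :: "nat \<Rightarrow> int list" where
  "evec r = replicate r 0 @ replicate r 1"

definition vadd :: "int list \<Rightarrow> int list \<Rightarrow> int list" where
  "vadd x y = map2 (+) x y"

definition vsmult :: "int \<Rightarrow> int list \<Rightarrow> int list" where
  "vsmult c x = map ((*) c) x"

text \<open>Splitting maps, given as lists of (1-based) selected indices.\<close>
definition sel :: "int list \<Rightarrow> nat list \<Rightarrow> int list" where
  "sel y idx = map (ent y) idx"

definition theta_idx :: "nat \<Rightarrow> nat \<Rightarrow> nat list" where
  "theta_idx r i =
    (if r = 1 then [1, 2]
     else if even r then
       (if i = 1 then [1] @ map (\<lambda>k. 2*k) [1..<r div 2 + 1] @ map (\<lambda>k. r+1+2*k) [1..<r div 2] @ [2*r]
        else [1] @ map (\<lambda>k. 2*k+1) [1..<r div 2] @ [r+1] @ map (\<lambda>k. r+2*k) [1..<r div 2 + 1])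
     else
       (if i = 1 then [1] @ map (\<lambda>k. 2*k) [1..<(r-1) div 2 + 1] @ map (\<lambda>k. r+2*k) [1..<(r-1) div 2 + 1] @ [2*r]
        else map (\<lambda>k. 2*k-1) [1..<(r+1) div 2 + 1] @ map (\<lambda>k. r+2*k-1) [1..<(r+1) div 2 + 1]))"

definition thetap_idx :: "nat \<Rightarrow> nat \<Rightarrow> nat list" where
  "thetap_idx r i =
    (if r = 1 then [1]
     else if even r then
       (if i = 1 then map (\<lambda>k. 2*k) [1..<r div 2 + 1] @ map (\<lambda>k. r+2*k-1) [1..<r div 2 + 1]
        else map (\<lambda>k. 2*k-1) [1..<r div 2 + 1] @ map (\<lambda>k. r+2*k) [1..<r div 2 + 1])
     else
       (if i = 1 then map (\<lambda>k. 2*k) [1..<(r+1) div 2 + 1] @ map (\<lambda>k. r+2*k) [1..<(r-1) div 2 + 1]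
        else map (\<lambda>k. 2*k-1) [1..<(r+1) div 2 + 1] @ map (\<lambda>k. r+1+2*k) [1..<(r-1) div 2 + 1]))"

definition theta :: "nat \<Rightarrow> nat \<Rightarrow> int list \<Rightarrow> int list" where
  "theta r i z = sel z (theta_idx r i)"

definition thetap :: "nat \<Rightarrow> nat \<Rightarrow> int list \<Rightarrow> int list" where
  "thetap r i z = sel z (thetap_idx r i)"

lemma "theta_idx 4 1 = [1,2,4,7,8]" "theta_idx 4 2 = [1,3,5,6,8]"
      "thetap_idx 4 1 = [2,4,5,7]" "thetap_idx 4 2 = [1,3,6,8]"
      "theta_idx 2 1 = [1,2,4]" "theta_idx 2 2 = [1,3,4]"
      "thetap_idx 2 1 = [2,3]" "thetap_idx 2 2 = [1,4]"
      "theta_idx 5 1 = [1,2,4,7,9,10]" "theta_idx 5 2 = [1,3,5,6,8,10]"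
      "thetap_idx 5 1 = [2,4,6,7,9]" "thetap_idx 5 2 = [1,3,5,8,10]"
      "theta_idx 3 1 = [1,2,5,6]" "theta_idx 3 2 = [1,3,4,6]"
      "thetap_idx 3 1 = [2,4,5]" "thetap_idx 3 2 = [1,3,6]"
  by (simp_all add: theta_idx_def thetap_idx_def upt_rec)

end

theory Submission
  imports Defs
begin

(*
  Write P and Q for the entry functions of uh = u + d e and vh = v + d e. Condition (4.2)
  says that P and Q alternate: Q j \<le> P j for odd j and P j \<le> Q j for even j. This is
  unaffected by the shift, which also keeps both vectors weakly decreasing because d is at
  most both defects. The index lists of the splitting maps straddle the positions 2k+1, 2k+2:
  \<theta>(k) \<le> 2k+1 \<le> \<theta>'(k) \<le> 2k+2 \<le> \<theta>(k+1), so monotonicity turns alternation into both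
  interlacings. Conversely every alternation inequality is one of the interlacing inequalities,
  except at position r + 1, where the vanishing defect of uh (r even) or vh (r odd) supplies
  it. Finally, alternation makes that defect the smaller of the two, and the shift by d makes
  the smaller one zero.
*)

lemma pos_nat_parity_cases:
  fixes r :: nat
  assumes "r \<ge> 1"
  obtains "r = 1" | m where "r = 2*m" "m \<ge> 1" | m where "r = 2*m+1" "m \<ge> 1"
proof -
  obtain m where "r = 2*m \<or> r = 2*m+1" by (metis evenE oddE)
  then show ?thesis using that assms by (cases "m = 0") auto
qed

lemma theta_idx_1_nth:
  assumes "r \<ge> 1" "k \<le> r"
  shows "theta_idx r 1 ! k = (if k = 0 then 1 else if 2*k \<le> r then 2*k else if k < r then 2*k+1 else 2*r)"
  using assms(1) by (cases rule: pos_nat_parity_cases) (use assms in \<open>auto simp: theta_idx_def nth_append nth_Cons'\<close>)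

lemma theta_idx_2_nth:
  assumes "r \<ge> 1" "k \<le> r"
  shows "theta_idx r 2 ! k = (if 2*k \<le> r then 2*k+1 else 2*k)"
  using assms(1) by (cases rule: pos_nat_parity_cases) (use assms in \<open>auto simp: theta_idx_def nth_append nth_Cons'\<close>)

(* For r = 1 the map is y \<mapsto> y\<^sub>1 rather than the generic y \<mapsto> y\<^sub>2. *)
lemma thetap_idx_1_nth:
  assumes "r \<ge> 1" "k < r"
  shows "thetap_idx r 1 ! k = (if 1 < r \<and> 2*k < r then 2*k+2 else 2*k+1)"
  using assms(1) by (cases rule: pos_nat_parity_cases) (use assms in \<open>auto simp: thetap_idx_def nth_append nth_Cons'\<close>)

lemma thetap_idx_2_nth:
  assumes "r \<ge> 1" "k < r"
  shows "thetap_idx r 2 ! k = (if 2*k < r then 2*k+1 else 2*k+2)"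
  using assms(1) by (cases rule: pos_nat_parity_cases) (use assms in \<open>auto simp: thetap_idx_def nth_append nth_Cons'\<close>)

lemma length_theta_idx: "r \<ge> 1 \<Longrightarrow> length (theta_idx r i) = r + 1"
  by (cases rule: pos_nat_parity_cases) (auto simp: theta_idx_def)

lemma length_thetap_idx: "r \<ge> 1 \<Longrightarrow> length (thetap_idx r i) = r"
  by (cases rule: pos_nat_parity_cases) (auto simp: thetap_idx_def)

lemma theta_idx_straddles:
  assumes "r \<ge> 1" "i \<in> {1,2}" "k < r"
  shows "1 \<le> theta_idx r i ! k" "theta_idx r i ! k \<le> 2*k+1"
    "2*k+1 \<le> thetap_idx r i ! k" "thetap_idx r i ! k \<le> 2*k+2"
    "2*k+2 \<le> theta_idx r i ! Suc k" "theta_idx r i ! Suc k \<le> 2*r"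
  using assms theta_idx_1_nth[of r k] theta_idx_1_nth[of r "Suc k"] theta_idx_2_nth[of r k]
    theta_idx_2_nth[of r "Suc k"] thetap_idx_1_nth[of r k] thetap_idx_2_nth[of r k]
  by auto

(* Condition (4.2) for P = ent u, Q = ent v, without its middle inequality, which holds by monotonicity. *)
definition zigzag :: "nat \<Rightarrow> (nat \<Rightarrow> int) \<Rightarrow> (nat \<Rightarrow> int) \<Rightarrow> bool" where
  "zigzag r P Q \<longleftrightarrow> (\<forall>j\<in>{1..2*r}. if odd j then Q j \<le> P j else P j \<le> Q j)"

lemma zigzag_le_across_odd:
  assumes "antimono_on {1..2*r} P" "antimono_on {1..2*r} Q" "zigzag r P Q"
    and "1 \<le> a" "a \<le> l" "l \<le> c" "c \<le> 2*r" "odd l"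
  shows "Q c \<le> P a"
proof -
  have "Q c \<le> Q l" by (rule monotone_onD[OF assms(2)]) (use assms(4-7) in auto)
  also have "\<dots> \<le> P l" using assms(3-8) by (auto simp: zigzag_def)
  also have "\<dots> \<le> P a" by (rule monotone_onD[OF assms(1)]) (use assms(4-7) in auto)
  finally show ?thesis .
qed

lemma zigzag_le_across_even:
  assumes "antimono_on {1..2*r} P" "antimono_on {1..2*r} Q" "zigzag r P Q"
    and "1 \<le> c" "c \<le> l" "l \<le> b" "b \<le> 2*r" "even l"
  shows "P b \<le> Q c"
proof -
  have "P b \<le> P l" by (rule monotone_onD[OF assms(1)]) (use assms(4-7) in auto)
  also have "\<dots> \<le> Q l" using assms(3-8) by (auto simp: zigzag_def)
  also have "\<dots> \<le> Q c" by (rule monotone_onD[OF assms(2)]) (use assms(4-7) in auto)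
  finally show ?thesis .
qed

definition theta_interlacing :: "nat \<Rightarrow> (nat \<Rightarrow> int) \<Rightarrow> (nat \<Rightarrow> int) \<Rightarrow> bool" where
  "theta_interlacing r P Q \<longleftrightarrow> (\<forall>i\<in>{1,2}. \<forall>k<r.
     Q (thetap_idx r i ! k) \<le> P (theta_idx r i ! k) \<and> P (theta_idx r i ! Suc k) \<le> Q (thetap_idx r i ! k))"

lemma theta_interlacing_if_zigzag:
  assumes "r \<ge> 1" "antimono_on {1..2*r} P" "antimono_on {1..2*r} Q" "zigzag r P Q"
  shows "theta_interlacing r P Q"
  unfolding theta_interlacing_def
proof (intro ballI allI impI conjI)
  fix i :: nat and k assume "i \<in> {1,2}" "k < r"
  note s = theta_idx_straddles[OF assms(1) this]
  show "Q (thetap_idx r i ! k) \<le> P (theta_idx r i ! k)"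
    by (rule zigzag_le_across_odd[OF assms(2-4) s(1,2,3)]) (use s in auto)
  show "P (theta_idx r i ! Suc k) \<le> Q (thetap_idx r i ! k)"
    by (rule zigzag_le_across_even[OF assms(2-4) _ s(4,5,6)]) (use s in auto)
qed

lemma zigzag_if_theta_interlacing:
  assumes r: "r \<ge> 1" and mid: "if even r then P r = P (r+1) else Q r = Q (r+1)"
    and H: "theta_interlacing r P Q"
  shows "zigzag r P Q"
  unfolding zigzag_def
proof
  fix j assume j: "j \<in> {1..2*r}"
  have H1: "Q (thetap_idx r 1 ! k) \<le> P (theta_idx r 1 ! k) \<and> P (theta_idx r 1 ! Suc k) \<le> Q (thetap_idx r 1 ! k)"
   and H2: "Q (thetap_idx r 2 ! k) \<le> P (theta_idx r 2 ! k) \<and> P (theta_idx r 2 ! Suc k) \<le> Q (thetap_idx r 2 ! k)"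
    if "k < r" for k
    using H that unfolding theta_interlacing_def by auto
  show "if odd j then Q j \<le> P j else P j \<le> Q j"
  proof (cases "odd j")
    case True
    then obtain k where "j = 2*k+1" by (rule oddE)
    with j have k: "j = 2*k+1" "k < r" by auto
    show ?thesis
    proof (cases "2*k < r")
      case True
      then show ?thesis using H2[OF k(2)] k theta_idx_2_nth[OF r, of k] thetap_idx_2_nth[OF r k(2)] by auto
    next
      case False
      then show ?thesis using H1[OF k(2)] k mid r theta_idx_1_nth[OF r, of k] thetap_idx_1_nth[OF r k(2)]
        by (auto split: if_splits)
    qed
  next
    case False
    define k where "k = j div 2 - 1"
    have k: "j = 2*k+2" "k < r" using False j unfolding k_def by auto
    consider "2*k+2 \<le> r" | "2*k+1 = r" | "r \<le> 2*k" by linarith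
    then show ?thesis
    proof cases
      case 1
      then show ?thesis using H1[OF k(2)] k theta_idx_1_nth[OF r, of "Suc k"] thetap_idx_1_nth[OF r k(2)] by auto
    next
      case 2
      then show ?thesis using H2[OF k(2)] k mid theta_idx_2_nth[OF r, of "Suc k"] thetap_idx_2_nth[OF r k(2)] by auto
    next
      case 3
      then show ?thesis using H2[OF k(2)] k theta_idx_2_nth[OF r, of "Suc k"] thetap_idx_2_nth[OF r k(2)] by auto
    qed
  qed
qed

lemma zigzag_middle_defect:
  assumes "r \<ge> 1" "antimono_on {1..2*r} P" "antimono_on {1..2*r} Q" "zigzag r P Q"
    and "min (P r - P (r+1)) (Q r - Q (r+1)) = 0"
  shows "if even r then P r = P (r+1) else Q r = Q (r+1)"
proof -
  have "P (r+1) \<le> P r" "Q (r+1) \<le> Q r"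
    using monotone_onD[OF assms(2), of r "r+1"] monotone_onD[OF assms(3), of r "r+1"] assms(1) by auto
  moreover have "if even r then P r \<le> Q r \<and> Q (r+1) \<le> P (r+1) else Q r \<le> P r \<and> P (r+1) \<le> Q (r+1)"
    using assms(1,4) unfolding zigzag_def by force
  ultimately show ?thesis using assms(5) by (auto split: if_splits)
qed

lemma zigzag_iff_theta_interlacing:
  assumes "r \<ge> 1" "antimono_on {1..2*r} P" "antimono_on {1..2*r} Q"
    and "min (P r - P (r+1)) (Q r - Q (r+1)) = 0"
  shows "zigzag r P Q \<longleftrightarrow>
    (if even r then P r = P (r+1) else Q r = Q (r+1)) \<and> theta_interlacing r P Q"
  using zigzag_middle_defect[OF assms(1-3) _ assms(4)] theta_interlacing_if_zigzag[OF assms(1-3)]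
    zigzag_if_theta_interlacing[OF assms(1)] by blast

lemma antimono_on_ent_if_X0plus:
  "u \<in> X0plus N \<Longrightarrow> antimono_on {1..N} (ent u)"
  by (auto simp: X0plus_def Xplus_def intro!: monotone_onI)

lemma cond42_iff_zigzag:
  assumes "antimono_on {1..2*r} (ent v)"
  shows "cond42 r u v \<longleftrightarrow> zigzag r (ent u) (ent v)"
proof
  assume c: "cond42 r u v"
  show "zigzag r (ent u) (ent v)"
    unfolding zigzag_def
  proof
    fix j assume j: "j \<in> {1..2*r}"
    show "if odd j then ent v j \<le> ent u j else ent u j \<le> ent v j"
    proof (cases "odd j")
      case True
      then obtain k where "j = 2*k+1" by (rule oddE)
      then show ?thesis using c j True unfolding cond42_def by (auto dest: bspec[of _ _ "k+1"])
    next
      case False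
      then obtain k where "j = 2*k" by blast
      then show ?thesis using c j False unfolding cond42_def by (auto dest: bspec[of _ _ k])
    qed
  qed
next
  assume z: "zigzag r (ent u) (ent v)"
  show "cond42 r u v"
    unfolding cond42_def
  proof
    fix \<rho> assume \<rho>: "\<rho> \<in> {1..r}"
    have "odd (2*\<rho>-1)" "1 \<le> 2*\<rho>-1" "2*\<rho>-1 \<le> 2*\<rho>" "2*\<rho> \<le> 2*r" using \<rho> by auto
    then show "ent u (2*\<rho>-1) \<ge> ent v (2*\<rho>-1) \<and> ent v (2*\<rho>-1) \<ge> ent v (2*\<rho>) \<and> ent v (2*\<rho>) \<ge> ent u (2*\<rho>)"
      using z[unfolded zigzag_def, rule_format, of "2*\<rho>-1"] z[unfolded zigzag_def, rule_format, of "2*\<rho>"]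
        monotone_onD[OF assms, of "2*\<rho>-1" "2*\<rho>"] \<rho> by auto
  qed
qed

lemma ent_vadd_evec:
  assumes "length u = 2*r" "1 \<le> j" "j \<le> 2*r"
  shows "ent (vadd u (vsmult d (evec r))) j = ent u j + (if r < j then d else 0)"
  using assms by (auto simp: ent_def vadd_def vsmult_def evec_def nth_append)

lemma defect_vadd_evec:
  assumes "length u = 2*r" "r \<ge> 1"
  shows "defect r (vadd u (vsmult d (evec r))) = defect r u - d"
  using assms by (simp add: defect_def ent_vadd_evec)

lemma antimono_on_vadd_evec:
  assumes "length u = 2*r" "antimono_on {1..2*r} (ent u)" "d \<le> defect r u"
  shows "antimono_on {1..2*r} (ent (vadd u (vsmult d (evec r))))"
proof (rule monotone_onI)
  fix i j assume ij: "i \<in> {1..2*r}" "j \<in> {1..2*r}" "i \<le> j"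
  have "ent u j \<le> ent u i" using monotone_onD[OF assms(2) ij] .
  moreover have "ent u j + d \<le> ent u i" if "i \<le> r" "r < j"
  proof -
    have "ent u j \<le> ent u (r+1)" "ent u r \<le> ent u i"
      using monotone_onD[OF assms(2)] ij that by auto
    then show ?thesis using assms(3) unfolding defect_def by linarith
  qed
  ultimately show "ent (vadd u (vsmult d (evec r))) j \<le> ent (vadd u (vsmult d (evec r))) i"
    using ij by (auto simp: ent_vadd_evec[OF assms(1)])
qed

lemma zigzag_vadd_evec_iff:
  assumes "length u = 2*r" "length v = 2*r"
  shows "zigzag r (ent (vadd u (vsmult d (evec r)))) (ent (vadd v (vsmult d (evec r)))) \<longleftrightarrow>
    zigzag r (ent u) (ent v)"
  using assms by (simp add: zigzag_def ent_vadd_evec)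

lemma sel_interlace_iff:
  assumes "length I = length J + 1"
  shows "sel q J \<prec> sel p I \<longleftrightarrow>
    (\<forall>k<length J. ent q (J!k) \<le> ent p (I!k) \<and> ent p (I!Suc k) \<le> ent q (J!k))"
proof -
  have "(\<forall>\<rho>\<in>{1..n}. R \<rho>) \<longleftrightarrow> (\<forall>k<n. R (Suc k))" for n and R :: "nat \<Rightarrow> bool"
  proof
    assume "\<forall>\<rho>\<in>{1..n}. R \<rho>" then show "\<forall>k<n. R (Suc k)" by auto
  next
    assume R: "\<forall>k<n. R (Suc k)"
    show "\<forall>\<rho>\<in>{1..n}. R \<rho>"
    proof
      fix \<rho> assume "\<rho> \<in> {1..n}"
      then show "R \<rho>" using R[rule_format, of "\<rho> - 1"] by (cases \<rho>) auto
    qed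
  qed
  then show ?thesis using assms by (simp add: interlace_def sel_def ent_def)
qed

lemma theta_interlacing_ent_iff:
  assumes "r \<ge> 1"
  shows "theta_interlacing r (ent p) (ent q) \<longleftrightarrow> (\<forall>i\<in>{1,2}. thetap r i q \<prec> theta r i p)"
  using assms by (simp add: theta_interlacing_def theta_def thetap_def sel_interlace_iff
      length_theta_idx length_thetap_idx)

theorem corollary4p2:
  fixes r :: nat and u v :: "int list"
  assumes "r \<ge> 1" and "u \<in> X0plus (2 * r)" and "v \<in> X0plus (2 * r)"
  shows "let d = min (defect r u) (defect r v);
             uh = vadd u (vsmult d (evec r));
             vh = vadd v (vsmult d (evec r))
         in cond42 r u v \<longleftrightarrow>
            ((if even r then defect r uh = 0 else defect r vh = 0) \<and>
             (\<forall>i\<in>{1,2}. thetap r i vh \<prec> theta r i uh))"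
proof -
  define d where "d = min (defect r u) (defect r v)"
  define uh where "uh = vadd u (vsmult d (evec r))"
  define vh where "vh = vadd v (vsmult d (evec r))"
  have len: "length u = 2*r" "length v = 2*r"
    using assms(2,3) by (simp_all add: X0plus_def Xplus_def)
  have mono: "antimono_on {1..2*r} (ent u)" "antimono_on {1..2*r} (ent v)"
    using antimono_on_ent_if_X0plus assms(2,3) by blast+
  have mono_hat: "antimono_on {1..2*r} (ent uh)" "antimono_on {1..2*r} (ent vh)"
    unfolding uh_def vh_def using antimono_on_vadd_evec len mono d_def by simp_all
  have defect_hat: "defect r uh = defect r u - d" "defect r vh = defect r v - d"
    unfolding uh_def vh_def using len assms(1) by (simp_all add: defect_vadd_evec)
  then have "min (ent uh r - ent uh (r+1)) (ent vh r - ent vh (r+1)) = 0"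
    unfolding d_def defect_def by linarith
  note hat_iff = zigzag_iff_theta_interlacing[OF assms(1) mono_hat this]
  have "cond42 r u v \<longleftrightarrow> zigzag r (ent uh) (ent vh)"
    unfolding uh_def vh_def using len mono(2) by (simp add: cond42_iff_zigzag zigzag_vadd_evec_iff)
  also have "\<dots> \<longleftrightarrow> (if even r then defect r uh = 0 else defect r vh = 0) \<and>
      (\<forall>i\<in>{1,2}. thetap r i vh \<prec> theta r i uh)"
    unfolding hat_iff theta_interlacing_ent_iff[OF assms(1)] by (simp add: defect_def)
  finally show ?thesis unfolding Let_def d_def[symmetric] uh_def[symmetric] vh_def[symmetric] .
qed

end
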